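(* Let $\mathcal{T}$ be an essentially small triangulated category and let $(X,\sigma)$ be a classifying support data for $\mathcal{T}$. Then there is a homeomorphism $X\cong\operatorname{Spec}_\triangle(\mathcal{T})$.
   Context: A support data for $\mathcal{T}$ is a pair $(X,\sigma)$ of a topological space $X$ and an assignment $\sigma$ sending each object $M$ of $\mathcal{T}$ to a closed subset $\sigma(M)\subseteq X$ such that: $\sigma(0)=\emptyset$; $\sigma(M[n])=\sigma(M)$ for all $M$ and $n\in\mathbb{Z}$; $\sigma(M)\subseteq\sigma(L)\cup\sigma(N)$ for every exact triangle $L\to M\to N\to L[1]$; and $\sigma(M\oplus N)=\sigma(M)\cup\sigma(N)$. It is classifying if (i) $X$ is a noetherian sober space (sober: every irreducible closed subset has a unique generic point), and (ii) the maps $\mathcal{X}\mapsto\sigma(\mathcal{X}):=\bigcup_{M\in\mathcal{X}}\sigma(M)$ and $W\mapsto\sigma^{-1}(W):=\{M\in\mathcal{T}\mid\sigma(M)\subseteq W\}$ are mutually inverse lattice isomorphisms between the set of thick subcategories of $\mathcal{T}$ and the set of specialization-closed subsets of $X$ (unions of closed subsets). A thick subcategory $\mathcal{P}$ of $\mathcal{T}$ is called prime if among all thick subcategories $\mathcal{X}$ with $\mathcal{P}\subsetneq\mathcal{X}$ there is a unique minimal one. $\operatorname{Spec}_\triangle(\mathcal{T})$ is the set of prime thick subcategories, with closed subsets $\mathsf{Z}(\mathcal{E}):=\{\mathcal{P}\mid\mathcal{P}\cap\mathcal{E}=\emptyset\}$ for families $\mathcal{E}$ of objects of $\mathcal{T}$.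 *)

theory Defs
  imports "HOL-Analysis.Analysis"
begin

record ('o, 'm) tricat =
  Ob   :: "'o set"
  Arr  :: "'m set"
  Dom  :: "'m \<Rightarrow> 'o"
  Cod  :: "'m \<Rightarrow> 'o"
  Id   :: "'o \<Rightarrow> 'm"
  Comp :: "'m \<Rightarrow> 'm \<Rightarrow> 'm"      (* Comp g f = g o f *)
  Add  :: "'m \<Rightarrow> 'm \<Rightarrow> 'm"
  Neg  :: "'m \<Rightarrow> 'm"
  Zero :: "'o \<Rightarrow> 'o \<Rightarrow> 'm"
  ShO  :: "'o \<Rightarrow> 'o"
  ShM  :: "'m \<Rightarrow> 'm"
  Dist :: "('o \<times> 'o \<times> 'o \<times> 'm \<times> 'm \<times> 'm) set"

definition Hom :: "('o, 'm, 'z) tricat_scheme \<Rightarrow> 'o \<Rightarrow> 'o \<Rightarrow> 'm set" where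
  "Hom C A B = {f \<in> Arr C. Dom C f = A \<and> Cod C f = B}"

definition is_category :: "('o, 'm, 'z) tricat_scheme \<Rightarrow> bool" where
  "is_category C \<longleftrightarrow>
     (\<forall>f \<in> Arr C. Dom C f \<in> Ob C \<and> Cod C f \<in> Ob C) \<and>
     (\<forall>A \<in> Ob C. Id C A \<in> Hom C A A) \<and>
     (\<forall>A \<in> Ob C. \<forall>B \<in> Ob C. \<forall>D \<in> Ob C. \<forall>f \<in> Hom C A B. \<forall>g \<in> Hom C B D.
        Comp C g f \<in> Hom C A D) \<and>
     (\<forall>f \<in> Arr C. Comp C (Id C (Cod C f)) f = f \<and> Comp C f (Id C (Dom C f)) = f) \<and>
     (\<forall>f \<in> Arr C. \<forall>g \<in> Arr C. \<forall>h \<in> Arr C. Cod C f = Dom C g \<longrightarrow> Cod C g = Dom C h \<longrightarrow>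
        Comp C h (Comp C g f) = Comp C (Comp C h g) f)"

definition is_preadditive :: "('o, 'm, 'z) tricat_scheme \<Rightarrow> bool" where
  "is_preadditive C \<longleftrightarrow> is_category C \<and>
     (\<forall>A \<in> Ob C. \<forall>B \<in> Ob C.
        Zero C A B \<in> Hom C A B \<and>
        (\<forall>f \<in> Hom C A B. \<forall>g \<in> Hom C A B. Add C f g \<in> Hom C A B) \<and>
        (\<forall>f \<in> Hom C A B. Neg C f \<in> Hom C A B) \<and>
        (\<forall>f \<in> Hom C A B. \<forall>g \<in> Hom C A B. \<forall>h \<in> Hom C A B.
            Add C (Add C f g) h = Add C f (Add C g h)) \<and>
        (\<forall>f \<in> Hom C A B. \<forall>g \<in> Hom C A B. Add C f g = Add C g f) \<and>
        (\<forall>f \<in> Hom C A B. Add C (Zero C A B) f = f) \<and>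
        (\<forall>f \<in> Hom C A B. Add C f (Neg C f) = Zero C A B)) \<and>
     (\<forall>A \<in> Ob C. \<forall>B \<in> Ob C. \<forall>D \<in> Ob C. \<forall>f \<in> Hom C A B. \<forall>g \<in> Hom C A B. \<forall>h \<in> Hom C B D.
        Comp C h (Add C f g) = Add C (Comp C h f) (Comp C h g)) \<and>
     (\<forall>A \<in> Ob C. \<forall>B \<in> Ob C. \<forall>D \<in> Ob C. \<forall>f \<in> Hom C A B. \<forall>g \<in> Hom C B D. \<forall>h \<in> Hom C B D.
        Comp C (Add C g h) f = Add C (Comp C g f) (Comp C h f))"

definition is_zero_obj :: "('o, 'm, 'z) tricat_scheme \<Rightarrow> 'o \<Rightarrow> bool" where
  "is_zero_obj C Z \<longleftrightarrow> Z \<in> Ob C \<and>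
     (\<forall>A \<in> Ob C. (\<exists>!f. f \<in> Hom C Z A) \<and> (\<exists>!f. f \<in> Hom C A Z))"

definition is_biproduct :: "('o, 'm, 'z) tricat_scheme \<Rightarrow> 'o \<Rightarrow> 'o \<Rightarrow> 'o \<Rightarrow> bool" where
  "is_biproduct C M N S \<longleftrightarrow> M \<in> Ob C \<and> N \<in> Ob C \<and> S \<in> Ob C \<and>
     (\<exists>i1 \<in> Hom C M S. \<exists>i2 \<in> Hom C N S. \<exists>p1 \<in> Hom C S M. \<exists>p2 \<in> Hom C S N.
        Comp C p1 i1 = Id C M \<and> Comp C p2 i2 = Id C N \<and>
        Comp C p1 i2 = Zero C N M \<and> Comp C p2 i1 = Zero C M N \<and>
        Add C (Comp C i1 p1) (Comp C i2 p2) = Id C S)"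

definition is_additive :: "('o, 'm, 'z) tricat_scheme \<Rightarrow> bool" where
  "is_additive C \<longleftrightarrow> is_preadditive C \<and> (\<exists>Z. is_zero_obj C Z) \<and>
     (\<forall>M \<in> Ob C. \<forall>N \<in> Ob C. \<exists>S. is_biproduct C M N S)"

definition shift_ok :: "('o, 'm, 'z) tricat_scheme \<Rightarrow> bool" where
  "shift_ok C \<longleftrightarrow>
     bij_betw (ShO C) (Ob C) (Ob C) \<and> bij_betw (ShM C) (Arr C) (Arr C) \<and>
     (\<forall>f \<in> Arr C. Dom C (ShM C f) = ShO C (Dom C f) \<and> Cod C (ShM C f) = ShO C (Cod C f)) \<and>
     (\<forall>A \<in> Ob C. ShM C (Id C A) = Id C (ShO C A)) \<and>
     (\<forall>f \<in> Arr C. \<forall>g \<in> Arr C. Cod C f = Dom C g \<longrightarrow>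
        ShM C (Comp C g f) = Comp C (ShM C g) (ShM C f)) \<and>
     (\<forall>A \<in> Ob C. \<forall>B \<in> Ob C. \<forall>f \<in> Hom C A B. \<forall>g \<in> Hom C A B.
        ShM C (Add C f g) = Add C (ShM C f) (ShM C g))"

definition is_iso :: "('o, 'm, 'z) tricat_scheme \<Rightarrow> 'm \<Rightarrow> bool" where
  "is_iso C f \<longleftrightarrow> f \<in> Arr C \<and>
     (\<exists>g \<in> Hom C (Cod C f) (Dom C f). Comp C g f = Id C (Dom C f) \<and> Comp C f g = Id C (Cod C f))"

definition is_triangle :: "('o, 'm, 'z) tricat_scheme \<Rightarrow> ('o \<times> 'o \<times> 'o \<times> 'm \<times> 'm \<times> 'm) \<Rightarrow> bool" where
  "is_triangle C T = (case T of (X, Y, Z, u, v, w) \<Rightarrow>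
     X \<in> Ob C \<and> Y \<in> Ob C \<and> Z \<in> Ob C \<and>
     u \<in> Hom C X Y \<and> v \<in> Hom C Y Z \<and> w \<in> Hom C Z (ShO C X))"

definition tri_morph :: "('o, 'm, 'z) tricat_scheme \<Rightarrow> ('o \<times> 'o \<times> 'o \<times> 'm \<times> 'm \<times> 'm)
     \<Rightarrow> ('o \<times> 'o \<times> 'o \<times> 'm \<times> 'm \<times> 'm) \<Rightarrow> 'm \<Rightarrow> 'm \<Rightarrow> 'm \<Rightarrow> bool" where
  "tri_morph C T T' a b c = (case T of (X, Y, Z, u, v, w) \<Rightarrow> case T' of (X', Y', Z', u', v', w') \<Rightarrow>
     a \<in> Hom C X X' \<and> b \<in> Hom C Y Y' \<and> c \<in> Hom C Z Z' \<and>
     Comp C b u = Comp C u' a \<and> Comp C c v = Comp C v' b \<and>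
     Comp C (ShM C a) w = Comp C w' c)"

definition rotate :: "('o, 'm, 'z) tricat_scheme \<Rightarrow> ('o \<times> 'o \<times> 'o \<times> 'm \<times> 'm \<times> 'm)
     \<Rightarrow> ('o \<times> 'o \<times> 'o \<times> 'm \<times> 'm \<times> 'm)" where
  "rotate C T = (case T of (X, Y, Z, u, v, w) \<Rightarrow> (Y, Z, ShO C X, v, w, Neg C (ShM C u)))"

definition is_triangulated :: "('o, 'm, 'z) tricat_scheme \<Rightarrow> bool" where
  "is_triangulated C \<longleftrightarrow> is_additive C \<and> shift_ok C \<and>
     (\<forall>T \<in> Dist C. is_triangle C T) \<and>
     \<comment> \<open>TR1: closed under isomorphisms of triangles\<close>
     (\<forall>T \<in> Dist C. \<forall>T'. \<forall>a b c. is_triangle C T' \<and> tri_morph C T T' a b c \<and>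
        is_iso C a \<and> is_iso C b \<and> is_iso C c \<longrightarrow> T' \<in> Dist C) \<and>
     \<comment> \<open>TR1: X \<rightarrow> X \<rightarrow> 0 \<rightarrow> X[1] is distinguished\<close>
     (\<forall>X \<in> Ob C. \<forall>Z. is_zero_obj C Z \<longrightarrow>
        (X, X, Z, Id C X, Zero C X Z, Zero C Z (ShO C X)) \<in> Dist C) \<and>
     \<comment> \<open>TR1: every morphism extends to a distinguished triangle\<close>
     (\<forall>u \<in> Arr C. \<exists>Z v w. (Dom C u, Cod C u, Z, u, v, w) \<in> Dist C) \<and>
     \<comment> \<open>TR2: rotation\<close>
     (\<forall>T. is_triangle C T \<longrightarrow> (T \<in> Dist C \<longleftrightarrow> rotate C T \<in> Dist C)) \<and>
     \<comment> \<open>TR3: completion of morphisms\<close>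
     (\<forall>X Y Z u v w X' Y' Z' u' v' w' a b.
        (X, Y, Z, u, v, w) \<in> Dist C \<and> (X', Y', Z', u', v', w') \<in> Dist C \<and>
        a \<in> Hom C X X' \<and> b \<in> Hom C Y Y' \<and> Comp C b u = Comp C u' a \<longrightarrow>
        (\<exists>c. tri_morph C (X, Y, Z, u, v, w) (X', Y', Z', u', v', w') a b c)) \<and>
     \<comment> \<open>TR4: octahedral axiom\<close>
     (\<forall>X Y Z Z' X' Y' u v j k l i m n.
        (X, Y, Z', u, j, k) \<in> Dist C \<and> (Y, Z, X', v, l, i) \<in> Dist C \<and>
        (X, Z, Y', Comp C v u, m, n) \<in> Dist C \<longrightarrow>
        (\<exists>f g. f \<in> Hom C Z' Y' \<and> g \<in> Hom C Y' X' \<and>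
           (Z', Y', X', f, g, Comp C (ShM C j) i) \<in> Dist C \<and>
           Comp C f j = Comp C m v \<and> Comp C n f = k \<and>
           Comp C g m = l \<and> Comp C (ShM C u) n = Comp C i g))"

text \<open>Thick subcategories, identified with their (full, replete) sets of objects.\<close>
definition thick :: "('o, 'm, 'z) tricat_scheme \<Rightarrow> 'o set \<Rightarrow> bool" where
  "thick C \<X> \<longleftrightarrow> \<X> \<subseteq> Ob C \<and> \<X> \<noteq> {} \<and>
     (\<forall>M \<in> Ob C. M \<in> \<X> \<longleftrightarrow> ShO C M \<in> \<X>) \<and>
     (\<forall>L M N u v w. (L, M, N, u, v, w) \<in> Dist C \<longrightarrow>
        (L \<in> \<X> \<and> M \<in> \<X> \<longrightarrow> N \<in> \<X>) \<and> (M \<in> \<X> \<and> N \<in> \<X> \<longrightarrow> L \<in> \<X>) \<and>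
        (L \<in> \<X> \<and> N \<in> \<X> \<longrightarrow> M \<in> \<X>)) \<and>
     (\<forall>M N S. is_biproduct C M N S \<and> S \<in> \<X> \<longrightarrow> M \<in> \<X>)"

definition shiftn :: "('o, 'm, 'z) tricat_scheme \<Rightarrow> int \<Rightarrow> 'o \<Rightarrow> 'o" where
  "shiftn C n M = (if 0 \<le> n then (ShO C ^^ nat n) M
                   else (the_inv_into (Ob C) (ShO C) ^^ nat (- n)) M)"

definition support_data :: "('o, 'm, 'z) tricat_scheme \<Rightarrow> 'b topology \<Rightarrow> ('o \<Rightarrow> 'b set) \<Rightarrow> bool" where
  "support_data C X \<sigma> \<longleftrightarrow>
     (\<forall>M \<in> Ob C. closedin X (\<sigma> M)) \<and>
     (\<forall>Z. is_zero_obj C Z \<longrightarrow> \<sigma> Z = {}) \<and>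
     (\<forall>M \<in> Ob C. \<forall>n::int. \<sigma> (shiftn C n M) = \<sigma> M) \<and>
     (\<forall>L M N u v w. (L, M, N, u, v, w) \<in> Dist C \<longrightarrow> \<sigma> M \<subseteq> \<sigma> L \<union> \<sigma> N) \<and>
     (\<forall>M N S. is_biproduct C M N S \<longrightarrow> \<sigma> S = \<sigma> M \<union> \<sigma> N)"

definition noetherian_space :: "'b topology \<Rightarrow> bool" where
  "noetherian_space X \<longleftrightarrow>
     (\<forall>F :: nat \<Rightarrow> 'b set. (\<forall>k. closedin X (F k)) \<and> (\<forall>k. F (Suc k) \<subseteq> F k) \<longrightarrow>
        (\<exists>N. \<forall>k\<ge>N. F k = F N))"

definition irreducible_in :: "'b topology \<Rightarrow> 'b set \<Rightarrow> bool" where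
  "irreducible_in X Z \<longleftrightarrow> Z \<noteq> {} \<and>
     (\<forall>Z1 Z2. closedin X Z1 \<and> closedin X Z2 \<and> Z = Z1 \<union> Z2 \<longrightarrow> Z = Z1 \<or> Z = Z2)"

definition sober_space :: "'b topology \<Rightarrow> bool" where
  "sober_space X \<longleftrightarrow>
     (\<forall>Z. closedin X Z \<and> irreducible_in X Z \<longrightarrow> (\<exists>!x. x \<in> topspace X \<and> X closure_of {x} = Z))"

definition spec_closed :: "'b topology \<Rightarrow> 'b set \<Rightarrow> bool" where
  "spec_closed X W \<longleftrightarrow> (\<exists>\<C>. (\<forall>Z \<in> \<C>. closedin X Z) \<and> W = \<Union>\<C>)"

definition supp_of :: "('o \<Rightarrow> 'b set) \<Rightarrow> 'o set \<Rightarrow> 'b set" where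
  "supp_of \<sigma> \<X> = (\<Union>M \<in> \<X>. \<sigma> M)"

definition supp_inv :: "('o, 'm, 'z) tricat_scheme \<Rightarrow> ('o \<Rightarrow> 'b set) \<Rightarrow> 'b set \<Rightarrow> 'o set" where
  "supp_inv C \<sigma> W = {M \<in> Ob C. \<sigma> M \<subseteq> W}"

definition classifying :: "('o, 'm, 'z) tricat_scheme \<Rightarrow> 'b topology \<Rightarrow> ('o \<Rightarrow> 'b set) \<Rightarrow> bool" where
  "classifying C X \<sigma> \<longleftrightarrow> support_data C X \<sigma> \<and> noetherian_space X \<and> sober_space X \<and>
     (\<forall>\<X>. thick C \<X> \<longrightarrow> spec_closed X (supp_of \<sigma> \<X>) \<and> supp_inv C \<sigma> (supp_of \<sigma> \<X>) = \<X>) \<and>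
     (\<forall>W. spec_closed X W \<longrightarrow> thick C (supp_inv C \<sigma> W) \<and> supp_of \<sigma> (supp_inv C \<sigma> W) = W)"

definition prime_thick :: "('o, 'm, 'z) tricat_scheme \<Rightarrow> 'o set \<Rightarrow> bool" where
  "prime_thick C \<P> \<longleftrightarrow> thick C \<P> \<and>
     (\<exists>!\<Q>. thick C \<Q> \<and> \<P> \<subset> \<Q> \<and> (\<forall>\<X>. thick C \<X> \<and> \<P> \<subset> \<X> \<and> \<X> \<subseteq> \<Q> \<longrightarrow> \<X> = \<Q>))"

definition Spec_pts :: "('o, 'm, 'z) tricat_scheme \<Rightarrow> 'o set set" where
  "Spec_pts C = {\<P>. prime_thick C \<P>}"

definition ZZ :: "('o, 'm, 'z) tricat_scheme \<Rightarrow> 'o set \<Rightarrow> 'o set set" where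
  "ZZ C \<E> = {\<P> \<in> Spec_pts C. \<P> \<inter> \<E> = {}}"

definition Spec_tri :: "('o, 'm, 'z) tricat_scheme \<Rightarrow> 'o set topology" where
  "Spec_tri C = topology_generated_by (insert (Spec_pts C) {Spec_pts C - ZZ C \<E> | \<E>. True})"

end

theory Submission
  imports Defs
begin

text \<open>
  The classifying bijection \<open>\<X> \<mapsto> \<sigma>(\<X>)\<close> is an isomorphism of inclusion orders, so a prime
  thick subcategory corresponds to a specialization-closed set \<open>W\<close> with a unique minimal strict
  enlargement. Each \<open>Y\<^sub>x = {y. x \<notin> cl {y}}\<close> has one, namely \<open>Y\<^sub>x \<union> cl {x}\<close>. Conversely, in a
  noetherian space every point outside \<open>W\<close> specializes to a point \<open>w\<close> outside \<open>W\<close> with minimal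
  closure, and \<open>W \<union> cl {w}\<close> is then a minimal enlargement; uniqueness forces all these to
  coincide, which gives \<open>W = Y\<^sub>x\<close>. Sobriety makes \<open>x\<close> unique, so \<open>x \<mapsto> {M. x \<notin> \<sigma>(M)}\<close> is a
  bijection onto the spectrum. It is continuous because the preimage of \<open>Z(\<E>)\<close> is the
  intersection of the \<open>\<sigma>(M)\<close> with \<open>M \<in> \<E>\<close>, and closed because, by noetherian induction, every
  closed set is a finite union of irreducible closed sets, each of which is the closure of a
  point and hence some \<open>\<sigma>(M)\<close>, whose image is \<open>Z({M})\<close>.
\<close>

section \<open>Unique covers in a family of sets\<close>

definition covers :: "('a set \<Rightarrow> bool) \<Rightarrow> 'a set \<Rightarrow> 'a set \<Rightarrow> bool" where
  "covers S P Q \<longleftrightarrow> S Q \<and> P \<subset> Q \<and> (\<forall>V. S V \<and> P \<subset> V \<and> V \<subseteq> Q \<longrightarrow> V = Q)"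

definition has_unique_cover :: "('a set \<Rightarrow> bool) \<Rightarrow> 'a set \<Rightarrow> bool" where
  "has_unique_cover S P \<longleftrightarrow> (\<exists>!Q. covers S P Q)"

lemma prime_thick_iff_has_unique_cover:
  "prime_thick C \<P> \<longleftrightarrow> thick C \<P> \<and> has_unique_cover (thick C) \<P>"
  by (simp add: prime_thick_def has_unique_cover_def covers_def)

lemma least_strict_superset_imp_has_unique_cover:
  assumes "S Q" "P \<subset> Q" and least: "\<And>V. S V \<Longrightarrow> P \<subset> V \<Longrightarrow> Q \<subseteq> V"
  shows "has_unique_cover S P"
proof -
  have "covers S P Q"
    using assms unfolding covers_def by blast
  moreover have "Q' = Q" if "covers S P Q'" for Q'
    using that least[of Q'] assms(1,2) unfolding covers_def by blast
  ultimately show ?thesis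
    unfolding has_unique_cover_def by blast
qed

lemma has_unique_cover_transfer:
  assumes f: "\<And>A. S A \<Longrightarrow> T (f A) \<and> g (f A) = A"
    and g: "\<And>B. T B \<Longrightarrow> S (g B) \<and> f (g B) = B"
    and "mono f" "mono g" "S P"
  shows "has_unique_cover T (f P) \<longleftrightarrow> has_unique_cover S P"
proof -
  have subset_iff: "f A \<subseteq> f A' \<longleftrightarrow> A \<subseteq> A'" if "S A" "S A'" for A A'
    using that f \<open>mono f\<close> \<open>mono g\<close> by (metis monoD)
  have covers_iff: "covers T (f P) (f Q) \<longleftrightarrow> covers S P Q" if "S Q" for Q
    unfolding covers_def
    by (smt (verit, best) \<open>S P\<close> that f g subset_iff psubset_eq)
  have "(\<exists>!B. covers T (f P) B) \<longleftrightarrow> (\<exists>!A. covers S P A)"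
    by (smt (verit, ccfv_threshold) covers_def covers_iff f g)
  then show ?thesis
    unfolding has_unique_cover_def .
qed

section \<open>Specialization-closed sets\<close>

lemma closure_of_singleton_subset:
  "y \<in> X closure_of {x} \<Longrightarrow> X closure_of {y} \<subseteq> X closure_of {x}"
  by (simp add: closure_of_minimal)

lemma in_closure_of_singleton: "x \<in> topspace X \<Longrightarrow> x \<in> X closure_of {x}"
  using closure_of_subset[of "{x}" X] by blast

lemma spec_closed_iff:
  "spec_closed X W \<longleftrightarrow> W \<subseteq> topspace X \<and> (\<forall>v\<in>W. X closure_of {v} \<subseteq> W)"
proof
  assume "spec_closed X W"
  then obtain \<C> where \<C>: "\<And>Z. Z \<in> \<C> \<Longrightarrow> closedin X Z" and W: "W = \<Union>\<C>"
    unfolding spec_closed_def by blast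
  show "W \<subseteq> topspace X \<and> (\<forall>v\<in>W. X closure_of {v} \<subseteq> W)"
  proof (intro conjI ballI)
    show "W \<subseteq> topspace X"
      using \<C> closedin_subset W by blast
    fix v assume "v \<in> W"
    then obtain Z where "Z \<in> \<C>" "v \<in> Z"
      using W by blast
    then have "X closure_of {v} \<subseteq> Z"
      using \<C> by (simp add: closure_of_minimal)
    then show "X closure_of {v} \<subseteq> W"
      using \<open>Z \<in> \<C>\<close> W by blast
  qed
next
  assume W: "W \<subseteq> topspace X \<and> (\<forall>v\<in>W. X closure_of {v} \<subseteq> W)"
  have "W = \<Union>((\<lambda>v. X closure_of {v}) ` W)"
  proof
    show "W \<subseteq> \<Union>((\<lambda>v. X closure_of {v}) ` W)"
      using W in_closure_of_singleton by fast
  qed (use W in blast)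
  then show "spec_closed X W"
    unfolding spec_closed_def by (intro exI[of _ "(\<lambda>v. X closure_of {v}) ` W"]) auto
qed

lemma spec_closed_closedin: "closedin X K \<Longrightarrow> spec_closed X K"
  unfolding spec_closed_def by (rule exI[of _ "{K}"]) auto

lemma spec_closed_Un: "spec_closed X A \<Longrightarrow> spec_closed X B \<Longrightarrow> spec_closed X (A \<union> B)"
  unfolding spec_closed_iff by blast

definition non_generizations :: "'a topology \<Rightarrow> 'a \<Rightarrow> 'a set" where
  "non_generizations X x = {y \<in> topspace X. x \<notin> X closure_of {y}}"

lemma spec_closed_non_generizations: "spec_closed X (non_generizations X x)"
proof -
  have "X closure_of {v} \<subseteq> non_generizations X x" if "v \<in> non_generizations X x" for v
  proof
    fix y assume "y \<in> X closure_of {v}"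
    then have "y \<in> topspace X" "X closure_of {y} \<subseteq> X closure_of {v}"
      using closure_of_subset_topspace closure_of_singleton_subset by fastforce+
    then show "y \<in> non_generizations X x"
      using that unfolding non_generizations_def by blast
  qed
  then show ?thesis
    unfolding spec_closed_iff non_generizations_def by blast
qed

lemma not_in_non_generizations: "x \<in> topspace X \<Longrightarrow> x \<notin> non_generizations X x"
  by (simp add: non_generizations_def in_closure_of_singleton)

lemma subset_non_generizations:
  "spec_closed X W \<Longrightarrow> x \<notin> W \<Longrightarrow> W \<subseteq> non_generizations X x"
  unfolding spec_closed_iff non_generizations_def by blast

lemma non_generizations_has_unique_cover:
  assumes "x \<in> topspace X"
  shows "has_unique_cover (spec_closed X) (non_generizations X x)"
proof (rule least_strict_superset_imp_has_unique_cover)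
  show "spec_closed X (non_generizations X x \<union> X closure_of {x})"
    by (simp add: spec_closed_Un spec_closed_closedin spec_closed_non_generizations)
  have "x \<notin> non_generizations X x" "x \<in> X closure_of {x}"
    using assms by (simp_all add: not_in_non_generizations in_closure_of_singleton)
  then show "non_generizations X x \<subset> non_generizations X x \<union> X closure_of {x}"
    by blast
  fix V assume V: "spec_closed X V" "non_generizations X x \<subset> V"
  then obtain v where "v \<in> V" "v \<notin> non_generizations X x"
    by blast
  then have "x \<in> X closure_of {v}" "X closure_of {v} \<subseteq> V"
    using V(1) unfolding spec_closed_iff non_generizations_def by auto
  then have "X closure_of {x} \<subseteq> V"
    using closure_of_singleton_subset[of x X v] by blast
  then show "non_generizations X x \<union> X closure_of {x} \<subseteq> V"
    using V(2) by blast
qed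

section \<open>Noetherian and sober spaces\<close>

lemma noetherian_space_wf:
  assumes "noetherian_space X"
  shows "wf {(S, T). closedin X S \<and> closedin X T \<and> S \<subset> T}"
proof -
  have "\<nexists>F. \<forall>k. (F (Suc k), F k) \<in> {(S, T). closedin X S \<and> closedin X T \<and> S \<subset> T}"
  proof
    assume "\<exists>F. \<forall>k. (F (Suc k), F k) \<in> {(S, T). closedin X S \<and> closedin X T \<and> S \<subset> T}"
    then obtain F where "\<forall>k. (F (Suc k), F k) \<in> {(S, T). closedin X S \<and> closedin X T \<and> S \<subset> T}"
      by (rule exE)
    then have F: "\<forall>k. closedin X (F k)" "\<And>k. F (Suc k) \<subset> F k"
      by simp_all
    then obtain N where N: "\<forall>k\<ge>N. F k = F N"
      using assms unfolding noetherian_space_def by (meson less_imp_le)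
    have "F (Suc N) = F N"
      using N[rule_format, of "Suc N"] by simp
    with F(2)[of N] show False
      by simp
  qed
  then show ?thesis
    by (simp add: wf_iff_no_infinite_down_chain)
qed

lemma noetherian_closedin_induct [consumes 2, case_names less]:
  assumes "noetherian_space X" "closedin X K"
    and "\<And>K. closedin X K \<Longrightarrow> (\<And>K'. closedin X K' \<Longrightarrow> K' \<subset> K \<Longrightarrow> P K') \<Longrightarrow> P K"
  shows "P K"
proof -
  have "closedin X K \<longrightarrow> P K"
    by (induction K rule: wf_induct_rule[OF noetherian_space_wf[OF assms(1)]])
      (use assms(3) in blast)
  then show ?thesis
    using assms(2) by blast
qed

lemma noetherian_closedin_irreducible_induct [consumes 2, case_names empty irreducible Un]:
  assumes "noetherian_space X" "closedin X K"
    and "P {}"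
    and "\<And>K. closedin X K \<Longrightarrow> irreducible_in X K \<Longrightarrow> P K"
    and "\<And>A B. P A \<Longrightarrow> P B \<Longrightarrow> P (A \<union> B)"
  shows "P K"
  using assms(1,2)
proof (induction K rule: noetherian_closedin_induct)
  case (less K)
  show ?case
  proof (cases "K = {} \<or> irreducible_in X K")
    case True
    then show ?thesis
      using less.hyps assms(3,4) by blast
  next
    case False
    then obtain A B where "closedin X A" "closedin X B" "K = A \<union> B" "K \<noteq> A" "K \<noteq> B"
      unfolding irreducible_in_def by blast
    then show ?thesis
      using less.IH assms(5) by (metis Un_upper1 Un_upper2 psubsetI)
  qed
qed

definition minimal_outside :: "'a topology \<Rightarrow> 'a set \<Rightarrow> 'a \<Rightarrow> bool" where
  "minimal_outside X W w \<longleftrightarrow> w \<in> topspace X - W \<and>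
     (\<forall>w' \<in> topspace X - W. X closure_of {w'} \<subseteq> X closure_of {w} \<longrightarrow>
        X closure_of {w'} = X closure_of {w})"

lemma noetherian_exists_minimal_outside:
  assumes "noetherian_space X" "y \<in> topspace X - W"
  obtains w where "w \<in> X closure_of {y}" "minimal_outside X W w"
proof -
  let ?cl = "\<lambda>v. X closure_of {v}"
  let ?A = "X closure_of {y} - W"
  have "y \<in> ?A"
    using assms(2) in_closure_of_singleton by fastforce
  then obtain K where K: "K \<in> ?cl ` ?A"
    and min: "\<And>K'. (K', K) \<in> {(S, T). closedin X S \<and> closedin X T \<and> S \<subset> T} \<Longrightarrow> K' \<notin> ?cl ` ?A"
    using wfE_min[OF noetherian_space_wf[OF assms(1)], of "?cl y" "?cl ` ?A"] by blast
  then obtain w where w: "w \<in> ?A" "K = ?cl w"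
    by blast
  have "minimal_outside X W w"
    unfolding minimal_outside_def
  proof (intro conjI ballI impI)
    show "w \<in> topspace X - W"
      using w(1) closure_of_subset_topspace by fastforce
    fix w' assume w': "w' \<in> topspace X - W" "?cl w' \<subseteq> ?cl w"
    then have "w' \<in> ?A"
      using w(1) in_closure_of_singleton[of w' X] closure_of_singleton_subset[of w X y] by blast
    then have "?cl w' \<in> ?cl ` ?A"
      by blast
    then show "?cl w' = ?cl w"
      using min[of "?cl w'"] w'(2) w(2) by auto
  qed
  then show thesis
    using that w(1) by blast
qed

lemma covers_Un_closure_of_minimal_outside:
  assumes W: "spec_closed X W" and w: "minimal_outside X W w"
  shows "covers (spec_closed X) W (W \<union> X closure_of {w})"
  unfolding covers_def
proof (intro conjI allI impI)
  show "spec_closed X (W \<union> X closure_of {w})"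
    by (simp add: W spec_closed_Un spec_closed_closedin)
  show "W \<subset> W \<union> X closure_of {w}"
    using w in_closure_of_singleton[of w X] unfolding minimal_outside_def by blast
  fix V assume V: "spec_closed X V \<and> W \<subset> V \<and> V \<subseteq> W \<union> X closure_of {w}"
  then obtain v where v: "v \<in> V" "v \<notin> W" "v \<in> X closure_of {w}"
    by blast
  then have "v \<in> topspace X - W" "X closure_of {v} \<subseteq> X closure_of {w}"
    using closure_of_subset_topspace closure_of_singleton_subset[of v X w] by fastforce+
  then have "X closure_of {w} \<subseteq> V"
    using w v(1) V unfolding minimal_outside_def spec_closed_iff by blast
  then show "V = W \<union> X closure_of {w}"
    using V by blast
qed

lemma has_unique_cover_imp_non_generizations:
  assumes "noetherian_space X" "spec_closed X W" "has_unique_cover (spec_closed X) W"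
  obtains x where "x \<in> topspace X" "W = non_generizations X x"
proof -
  obtain Q where Q: "covers (spec_closed X) W Q"
    and uniq: "\<And>Q'. covers (spec_closed X) W Q' \<Longrightarrow> Q' = Q"
    using assms(3) unfolding has_unique_cover_def by blast
  \<comment> \<open>The unique cover identifies the closures of all minimal points outside \<open>W\<close>.\<close>
  have cover_eq: "W \<union> X closure_of {w} = Q" if "minimal_outside X W w" for w
    using uniq covers_Un_closure_of_minimal_outside[OF assms(2) that] by blast
  have "W \<subset> Q" "Q \<subseteq> topspace X"
    using Q unfolding covers_def spec_closed_iff by blast+
  then obtain z where "z \<in> topspace X - W"
    by blast
  then obtain x where x: "minimal_outside X W x"
    using noetherian_exists_minimal_outside[OF assms(1)] by blast
  then have x_out: "x \<in> topspace X" "x \<notin> W"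
    unfolding minimal_outside_def by blast+
  have "non_generizations X x \<subseteq> W"
  proof
    fix y assume y: "y \<in> non_generizations X x"
    show "y \<in> W"
    proof (rule ccontr)
      assume "y \<notin> W"
      then obtain w where w: "w \<in> X closure_of {y}" "minimal_outside X W w"
        using y noetherian_exists_minimal_outside[OF assms(1), of y W]
        unfolding non_generizations_def by blast
      then have "x \<in> X closure_of {w}"
        using cover_eq[OF x] cover_eq[OF w(2)] x_out in_closure_of_singleton[of x X] by blast
      then have "x \<in> X closure_of {y}"
        using closure_of_singleton_subset[OF w(1)] by blast
      then show False
        using y unfolding non_generizations_def by blast
    qed
  qed
  then show thesis
    using that x_out subset_non_generizations[OF assms(2) x_out(2)] by blast
qed

lemma irreducible_in_closure_of_singleton:
  assumes "x \<in> topspace X"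
  shows "irreducible_in X (X closure_of {x})"
  unfolding irreducible_in_def
proof (intro conjI allI impI)
  show "X closure_of {x} \<noteq> {}"
    using assms in_closure_of_singleton by fastforce
  fix A B assume AB: "closedin X A \<and> closedin X B \<and> X closure_of {x} = A \<union> B"
  then have "x \<in> A \<or> x \<in> B"
    using assms in_closure_of_singleton[of x X] by blast
  then show "X closure_of {x} = A \<or> X closure_of {x} = B"
    using AB closure_of_minimal[of "{x}" A X] closure_of_minimal[of "{x}" B X] by blast
qed

lemma sober_space_closure_of_singleton_inj:
  assumes "sober_space X" "x \<in> topspace X" "y \<in> topspace X"
    and "X closure_of {x} = X closure_of {y}"
  shows "x = y"
  using assms irreducible_in_closure_of_singleton[OF assms(2)]
  unfolding sober_space_def by (metis closedin_closure_of)

lemma non_generizations_inj: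
  assumes "sober_space X" "x \<in> topspace X" "y \<in> topspace X"
    and "non_generizations X x = non_generizations X y"
  shows "x = y"
proof -
  have "x \<notin> non_generizations X y" "y \<notin> non_generizations X x"
    using assms(4) not_in_non_generizations[OF assms(2)] not_in_non_generizations[OF assms(3)]
    by simp_all
  then have "x \<in> X closure_of {y}" "y \<in> X closure_of {x}"
    using assms(2,3) unfolding non_generizations_def by blast+
  then have "X closure_of {x} = X closure_of {y}"
    by (intro subset_antisym closure_of_singleton_subset)
  then show ?thesis
    by (rule sober_space_closure_of_singleton_inj[OF assms(1-3)])
qed

section \<open>The spectrum of a classifying support datum\<close>

lemma mono_supp_of: "mono (supp_of \<sigma>)"
  unfolding supp_of_def by (rule monoI) blast

lemma mono_supp_inv: "mono (supp_inv C \<sigma>)"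
  unfolding supp_inv_def by (rule monoI) blast

definition vanishing_at :: "('o, 'm, 'z) tricat_scheme \<Rightarrow> ('o \<Rightarrow> 'b set) \<Rightarrow> 'b \<Rightarrow> 'o set" where
  "vanishing_at C \<sigma> x = {M \<in> Ob C. x \<notin> \<sigma> M}"

lemma topspace_Spec_tri: "topspace (Spec_tri C) = Spec_pts C"
  unfolding Spec_tri_def topology_generated_by_topspace by auto

lemma closedin_Spec_tri_ZZ: "closedin (Spec_tri C) (ZZ C \<E>)"
  unfolding closedin_def topspace_Spec_tri
proof
  show "ZZ C \<E> \<subseteq> Spec_pts C"
    unfolding ZZ_def by blast
  show "openin (Spec_tri C) (Spec_pts C - ZZ C \<E>)"
    unfolding Spec_tri_def by (rule topology_generated_by_Basis) blast
qed

locale classifying_support_data =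
  fixes C :: "('o, 'm, 'z) tricat_scheme" and X :: "'b topology" and \<sigma> :: "'o \<Rightarrow> 'b set"
  assumes classifying: "classifying C X \<sigma>"
begin

lemma noetherian: "noetherian_space X"
  and sober: "sober_space X"
  using classifying unfolding classifying_def by simp_all

lemma closedin_supp: "M \<in> Ob C \<Longrightarrow> closedin X (\<sigma> M)"
  using classifying unfolding classifying_def support_data_def by simp

lemma supp_of_thick:
  "thick C \<X> \<Longrightarrow> spec_closed X (supp_of \<sigma> \<X>) \<and> supp_inv C \<sigma> (supp_of \<sigma> \<X>) = \<X>"
  using classifying unfolding classifying_def by simp

lemma supp_inv_spec_closed:
  "spec_closed X W \<Longrightarrow> thick C (supp_inv C \<sigma> W) \<and> supp_of \<sigma> (supp_inv C \<sigma> W) = W"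
  using classifying unfolding classifying_def by simp

lemma prime_thick_iff_supp_has_unique_cover:
  "prime_thick C \<P> \<longleftrightarrow> thick C \<P> \<and> has_unique_cover (spec_closed X) (supp_of \<sigma> \<P>)"
  using has_unique_cover_transfer[OF supp_of_thick supp_inv_spec_closed mono_supp_of mono_supp_inv]
  by (auto simp: prime_thick_iff_has_unique_cover)

lemma vanishing_at_eq_supp_inv:
  assumes "x \<in> topspace X"
  shows "vanishing_at C \<sigma> x = supp_inv C \<sigma> (non_generizations X x)"
proof -
  have "x \<notin> \<sigma> M \<longleftrightarrow> \<sigma> M \<subseteq> non_generizations X x" if "M \<in> Ob C" for M
    using subset_non_generizations[OF spec_closed_closedin[OF closedin_supp[OF that]]]
      not_in_non_generizations[OF assms] by blast
  then show ?thesis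
    unfolding vanishing_at_def supp_inv_def by blast
qed

lemma prime_thick_vanishing_at:
  assumes "x \<in> topspace X"
  shows "prime_thick C (vanishing_at C \<sigma> x)"
  using supp_inv_spec_closed[OF spec_closed_non_generizations] non_generizations_has_unique_cover[OF assms]
  by (simp add: prime_thick_iff_supp_has_unique_cover vanishing_at_eq_supp_inv[OF assms])

lemma prime_supp_of_thick_vanishing_at:
  assumes "prime_thick C \<P>"
  obtains x where "x \<in> topspace X" "\<P> = vanishing_at C \<sigma> x"
proof -
  have "thick C \<P>" "has_unique_cover (spec_closed X) (supp_of \<sigma> \<P>)"
    using assms prime_thick_iff_supp_has_unique_cover by blast+
  then obtain x where "x \<in> topspace X" "supp_of \<sigma> \<P> = non_generizations X x"
    using has_unique_cover_imp_non_generizations[OF noetherian] supp_of_thick by metis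
  then show thesis
    using that supp_of_thick[OF \<open>thick C \<P>\<close>] vanishing_at_eq_supp_inv by metis
qed

lemma Spec_pts_eq_image_vanishing_at: "Spec_pts C = vanishing_at C \<sigma> ` topspace X"
  unfolding Spec_pts_def using prime_thick_vanishing_at prime_supp_of_thick_vanishing_at by blast

lemma inj_on_vanishing_at: "inj_on (vanishing_at C \<sigma>) (topspace X)"
proof
  fix x y assume xy: "x \<in> topspace X" "y \<in> topspace X" "vanishing_at C \<sigma> x = vanishing_at C \<sigma> y"
  then have "non_generizations X x = non_generizations X y"
    using vanishing_at_eq_supp_inv supp_inv_spec_closed[OF spec_closed_non_generizations] by metis
  then show "x = y"
    using non_generizations_inj[OF sober xy(1,2)] by blast
qed

lemma image_vanishing_at_supp: "M \<in> Ob C \<Longrightarrow> vanishing_at C \<sigma> ` \<sigma> M = ZZ C {M}"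
  using closedin_subset[OF closedin_supp] Spec_pts_eq_image_vanishing_at
  unfolding ZZ_def vanishing_at_def by auto

lemma irreducible_closedin_eq_supp:
  assumes "closedin X K" "irreducible_in X K"
  obtains M where "M \<in> Ob C" "K = \<sigma> M"
proof -
  have "\<exists>!x. x \<in> topspace X \<and> X closure_of {x} = K"
    using sober assms unfolding sober_space_def by simp
  then obtain x where x: "x \<in> topspace X" "X closure_of {x} = K"
    by auto
  have "x \<in> supp_of \<sigma> (supp_inv C \<sigma> K)"
    using in_closure_of_singleton[OF x(1)] x(2) supp_inv_spec_closed[OF spec_closed_closedin[OF assms(1)]]
    by simp
  then obtain M where M: "M \<in> Ob C" "\<sigma> M \<subseteq> K" "x \<in> \<sigma> M"
    unfolding supp_of_def supp_inv_def by blast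
  have "K \<subseteq> \<sigma> M"
    using closure_of_minimal[of "{x}" "\<sigma> M" X] closedin_supp[OF M(1)] M(3) x(2) by simp
  then show thesis
    using that M by blast
qed

lemma preimage_ZZ_vanishing_at:
  "{x \<in> topspace X. vanishing_at C \<sigma> x \<in> ZZ C \<E>} = \<Inter>(insert (topspace X) (\<sigma> ` (\<E> \<inter> Ob C)))"
  using Spec_pts_eq_image_vanishing_at unfolding ZZ_def vanishing_at_def by auto

lemma continuous_map_vanishing_at: "continuous_map X (Spec_tri C) (vanishing_at C \<sigma>)"
  unfolding Spec_tri_def
proof (rule continuous_on_generated_topo)
  show "vanishing_at C \<sigma> ` topspace X \<subseteq> \<Union>(insert (Spec_pts C) {Spec_pts C - ZZ C \<E> | \<E>. True})"
    using Spec_pts_eq_image_vanishing_at by blast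
  fix U assume "U \<in> insert (Spec_pts C) {Spec_pts C - ZZ C \<E> | \<E>. True}"
  then obtain \<E> where "U = Spec_pts C \<or> U = Spec_pts C - ZZ C \<E>"
    by blast
  moreover have "closedin X {x \<in> topspace X. vanishing_at C \<sigma> x \<in> ZZ C \<E>}"
    unfolding preimage_ZZ_vanishing_at by (intro closedin_Inter) (auto intro: closedin_supp)
  then have "openin X (topspace X - {x \<in> topspace X. vanishing_at C \<sigma> x \<in> ZZ C \<E>})"
    by (rule openin_diff[OF openin_topspace])
  moreover have "vanishing_at C \<sigma> -` Spec_pts C \<inter> topspace X = topspace X"
    and "vanishing_at C \<sigma> -` (Spec_pts C - ZZ C \<E>) \<inter> topspace X
           = topspace X - {x \<in> topspace X. vanishing_at C \<sigma> x \<in> ZZ C \<E>}"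
    using Spec_pts_eq_image_vanishing_at by auto
  ultimately show "openin X (vanishing_at C \<sigma> -` U \<inter> topspace X)"
    by auto
qed

lemma closed_map_vanishing_at: "closed_map X (Spec_tri C) (vanishing_at C \<sigma>)"
  unfolding closed_map_def
proof (intro allI impI)
  fix K assume "closedin X K"
  with noetherian show "closedin (Spec_tri C) (vanishing_at C \<sigma> ` K)"
  proof (induction K rule: noetherian_closedin_irreducible_induct)
    case (irreducible K)
    then obtain M where "M \<in> Ob C" "K = \<sigma> M"
      using irreducible_closedin_eq_supp by blast
    then show ?case
      using image_vanishing_at_supp closedin_Spec_tri_ZZ by simp
  qed (simp_all add: image_Un closedin_Un)
qed

lemma homeomorphic_map_vanishing_at: "homeomorphic_map X (Spec_tri C) (vanishing_at C \<sigma>)"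
  using bijective_closed_imp_homeomorphic_map[OF continuous_map_vanishing_at closed_map_vanishing_at
      _ inj_on_vanishing_at]
  by (simp add: topspace_Spec_tri Spec_pts_eq_image_vanishing_at)

end

theorem theorem2p16:
  fixes C :: "('o, 'm) tricat" and X :: "'b topology" and \<sigma> :: "'o \<Rightarrow> 'b set"
  assumes "is_triangulated C"
    and "classifying C X \<sigma>"
  shows "X homeomorphic_space Spec_tri C"
proof -
  interpret classifying_support_data C X \<sigma>
    using assms(2) by unfold_locales
  show ?thesis
    using homeomorphic_map_vanishing_at by (rule homeomorphic_map_imp_homeomorphic_space)
qed

end
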